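(* Let $A$ be a finite alphabet, $E\subseteq W(A)$ and $\vec s=(s_n(x))_{n=0}^\infty\in V^\infty(A)$ such that $E$ is large in $\vec s$. Then there exist $m\in\mathbb N$ and $w(x)\in\langle (s_n(x))_{n=0}^m\rangle_v$ such that $\{w(a):a\in A\}\subseteq E$.
   Context: $\mathbb N=\{0,1,2,\dots\}$. Let $A$ be a finite nonempty alphabet. $W(A)$ denotes the set of all finite words over $A$, including the empty word; words are concatenated by juxtaposition. Fix a symbol $x\notin A$. A variable word over $A$ is a finite word over $A\cup\{x\}$ in which $x$ occurs at least once; $V(A)$ is the set of variable words. For $s(x)\in V(A)$ and $a\in A\cup\{x\}$, $s(a)$ is obtained by replacing every occurrence of $x$ by $a$. $V^\infty(A)$ is the set of infinite sequences of variable words. For a sequence $(s_n(x))_{n\in I}$ of variable words indexed by a set $I\subseteq\mathbb N$ that is either a finite interval or of the form $\{m,m+1,\dots\}$: the constant span $\langle (s_n(x))_{n\in I}\rangle_c$ is the set of all words $s_{l_0}(a_0)s_{l_1}(a_1)\cdots s_{l_j}(a_j)$ with $j\ge 0$, $l_0<\dots<l_j$ in $I$ and $a_0,\dots,a_j\in A$; the variable span $\langle (s_n(x))_{n\in I}\rangle_v$ is the set of all words $s_{l_0}(a_0)\cdots s_{l_j}(a_j)$ with $j\ge0$, $l_0<\dots<l_j$ in $I$, $a_0,\dots,a_j\in A\cup\{x\}$ and at least one $a_i=x$. Extracted subsequences: let $\vec s=(s_n(x))_{n=0}^\infty\in V^\infty(A)$. A finite sequence $(t_n(x))_{n=0}^l$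 of variable words is an extracted subsequence of $\vec s$ if there exist integers $0=m_0<m_1<\dots<m_{l+1}$ with $t_i(x)\in\langle (s_n(x))_{n=m_i}^{m_{i+1}-1}\rangle_v$ for all $0\le i\le l$. An infinite sequence $\vec t=(t_n(x))_{n=0}^\infty$ is an extracted subsequence of $\vec s$ if every initial segment $(t_n(x))_{n=0}^l$ is a finite extracted subsequence of $\vec s$. We write $\vec t\le\vec s$. A set $E\subseteq W(A)$ is large in $\vec s\in V^\infty(A)$ if $E\cap\langle\vec w\rangle_c\neq\emptyset$ for every infinite extracted subsequence $\vec w$ of $\vec s$. *)

theory Defs
  imports Main
begin

text \<open>Alphabet A :: 'a set. Words over A are 'a lists with letters in A.
  Words over A \<union> {x} are 'a option lists: None plays the role of the variable x,
  Some a the letter a.\<close>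

definition words :: "'a set \<Rightarrow> 'a list set" where
  "words A = lists A"

definition is_var_word :: "'a set \<Rightarrow> 'a option list \<Rightarrow> bool" where
  "is_var_word A w \<longleftrightarrow> set w \<subseteq> insert None (Some ` A) \<and> None \<in> set w"

definition var_seqs :: "'a set \<Rightarrow> (nat \<Rightarrow> 'a option list) set" where
  "var_seqs A = {s. \<forall>n. is_var_word A (s n)}"

definition inst :: "'a option list \<Rightarrow> 'a \<Rightarrow> 'a list" where
  "inst w a = map (\<lambda>c. case c of None \<Rightarrow> a | Some b \<Rightarrow> b) w"

definition vinst :: "'a option list \<Rightarrow> 'a option \<Rightarrow> 'a option list" where
  "vinst w b = map (\<lambda>c. case c of None \<Rightarrow> b | Some d \<Rightarrow> Some d) w"

definition const_span :: "'a set \<Rightarrow> (nat \<Rightarrow> 'a option list) \<Rightarrow> nat set \<Rightarrow> 'a list set" where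
  "const_span A s I = {concat (map (\<lambda>(l, a). inst (s l) a) ps) | ps.
      ps \<noteq> [] \<and> sorted_wrt (<) (map fst ps) \<and> set (map fst ps) \<subseteq> I \<and> set (map snd ps) \<subseteq> A}"

definition var_span :: "'a set \<Rightarrow> (nat \<Rightarrow> 'a option list) \<Rightarrow> nat set \<Rightarrow> 'a option list set" where
  "var_span A s I = {concat (map (\<lambda>(l, b). vinst (s l) b) ps) | ps.
      ps \<noteq> [] \<and> sorted_wrt (<) (map fst ps) \<and> set (map fst ps) \<subseteq> I
      \<and> set (map snd ps) \<subseteq> insert None (Some ` A) \<and> None \<in> set (map snd ps)}"

text \<open>Infinite extracted subsequence t \<le> s: every initial segment (t_n)_{n=0}^l is a
  finite extracted subsequence, i.e. there are 0 = m_0 < m_1 < ... < m_{l+1} with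
  t_i \<in> var_span of (s_n)_{n=m_i}^{m_{i+1}-1} for i \<le> l.\<close>
definition extracted :: "'a set \<Rightarrow> (nat \<Rightarrow> 'a option list) \<Rightarrow> (nat \<Rightarrow> 'a option list) \<Rightarrow> bool" where
  "extracted A t s \<longleftrightarrow> (\<forall>l. \<exists>m :: nat \<Rightarrow> nat. m 0 = 0 \<and> (\<forall>i\<le>l. m i < m (Suc i))
      \<and> (\<forall>i\<le>l. t i \<in> var_span A s {m i..<m (Suc i)}))"

definition large :: "'a set \<Rightarrow> 'a list set \<Rightarrow> (nat \<Rightarrow> 'a option list) \<Rightarrow> bool" where
  "large A E s \<longleftrightarrow> (\<forall>t. extracted A t s \<longrightarrow> E \<inter> const_span A t UNIV \<noteq> {})"

end

theory Submission
  imports Defs "HOL-Library.FuncSet"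
begin

text \<open>
  Suppose no variable word in the span of s has all its instances in E. We build an extracted
  sequence t block by block, keeping the finite set P of constant combinations of the blocks
  chosen so far. Colour each word c of length N by the set of prefixes p \<in> P for which p,
  followed by c substituted into the next N words of s, lies in E. By the Hales--Jewett theorem
  (proved by induction on the alphabet via colour focusing) some combinatorial line v is
  monochromatic; substituting v itself gives the next block t_n, and p t_n(a) \<notin> E for all
  p \<in> P and a \<in> A, since otherwise the variable word p t_n would have all its instances in E.
  Every word of the constant span of t has the form p t_n(a), so t witnesses that E is not large.
\<close>

section \<open>The Hales--Jewett theorem\<close>

definition cube :: "'a set \<Rightarrow> nat \<Rightarrow> 'a list set" where
  "cube A n = {w. set w \<subseteq> A \<and> length w = n}"

definition var_cube :: "'a set \<Rightarrow> nat \<Rightarrow> 'a option list set" where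
  "var_cube A n = {v. length v = n \<and> is_var_word A v}"

definition mono_line :: "'a set \<Rightarrow> nat \<Rightarrow> ('a list \<Rightarrow> 'c) \<Rightarrow> bool" where
  "mono_line A N \<chi> \<longleftrightarrow> (\<exists>v\<in>var_cube A N. \<exists>c. \<forall>a\<in>A. \<chi> (inst v a) = c)"

definition hales_jewett :: "'a set \<Rightarrow> 'c set \<Rightarrow> bool" where
  "hales_jewett A C \<longleftrightarrow> (\<exists>N. \<forall>\<chi>. \<chi> ` cube A N \<subseteq> C \<longrightarrow> mono_line A N \<chi>)"

lemma finite_cube: "finite A \<Longrightarrow> finite (cube A n)"
  using finite_lists_length_eq by (simp add: cube_def)

lemma cube_mono: "B \<subseteq> A \<Longrightarrow> cube B n \<subseteq> cube A n"
  by (auto simp: cube_def)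

lemma var_cube_mono: "B \<subseteq> A \<Longrightarrow> var_cube B n \<subseteq> var_cube A n"
  by (auto simp: var_cube_def is_var_word_def)

lemma Nil_cube: "[] \<in> cube A 0"
  by (simp add: cube_def)

lemma append_cube: "u \<in> cube A m \<Longrightarrow> w \<in> cube A n \<Longrightarrow> u @ w \<in> cube A (m + n)"
  by (auto simp: cube_def)

lemma append_var_cube: "u \<in> var_cube A m \<Longrightarrow> v \<in> var_cube A n \<Longrightarrow> u @ v \<in> var_cube A (m + n)"
  by (auto simp: var_cube_def is_var_word_def)

lemma append_var_cube_cube:
  "u \<in> var_cube A m \<Longrightarrow> w \<in> cube A n \<Longrightarrow> u @ map Some w \<in> var_cube A (m + n)"
  by (auto simp: var_cube_def cube_def is_var_word_def)

lemma append_cube_var_cube: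
  "w \<in> cube A m \<Longrightarrow> v \<in> var_cube A n \<Longrightarrow> map Some w @ v \<in> var_cube A (m + n)"
  by (auto simp: var_cube_def cube_def is_var_word_def)

lemma inst_append [simp]: "inst (u @ v) a = inst u a @ inst v a"
  by (simp add: inst_def)

lemma inst_map_Some [simp]: "inst (map Some u) a = u"
  by (induct u) (simp_all add: inst_def)

lemma inst_var_cube: "v \<in> var_cube A n \<Longrightarrow> a \<in> A \<Longrightarrow> inst v a \<in> cube A n"
  by (auto simp: var_cube_def cube_def is_var_word_def inst_def split: option.splits)

lemma mono_line_subsingleton: "A \<subseteq> {z} \<Longrightarrow> mono_line A 1 \<chi>"
  unfolding mono_line_def var_cube_def is_var_word_def
  by (rule bexI[of _ "[None]"], rule exI[of _ "\<chi> [z]"]) (auto simp: inst_def)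

lemma mono_line_prefix:
  assumes "u \<in> cube A m" and "mono_line A n (\<lambda>w. \<chi> (u @ w))"
  shows "mono_line A (m + n) \<chi>"
proof -
  obtain v c where "v \<in> var_cube A n" and "\<forall>a\<in>A. \<chi> (u @ inst v a) = c"
    using assms(2) by (auto simp: mono_line_def)
  moreover have "map Some u @ v \<in> var_cube A (m + n)"
    using append_cube_var_cube[OF assms(1) \<open>v \<in> var_cube A n\<close>] .
  ultimately show ?thesis
    unfolding mono_line_def by (intro bexI[of _ "map Some u @ v"] exI[of _ c]) auto
qed

lemma hales_jewett_finite_colours:
  assumes HJ: "\<And>r. hales_jewett A {..<r::nat}" and "finite C"
  shows "hales_jewett A C"
proof -
  obtain g where g: "bij_betw g C {..<card C}"
    using ex_bij_betw_finite_nat[OF \<open>finite C\<close>] by (auto simp: atLeast0LessThan)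
  obtain N where N: "\<And>\<chi>. \<chi> ` cube A N \<subseteq> {..<card C} \<Longrightarrow> mono_line A N \<chi>"
    using HJ unfolding hales_jewett_def by blast
  have "mono_line A N \<chi>" if \<chi>: "\<chi> ` cube A N \<subseteq> C" for \<chi>
  proof -
    have "(g \<circ> \<chi>) ` cube A N \<subseteq> {..<card C}"
      using \<chi> bij_betw_imp_surj_on[OF g] by auto
    then obtain v c where v: "v \<in> var_cube A N" and c: "\<forall>a\<in>A. g (\<chi> (inst v a)) = c"
      using N unfolding mono_line_def by fastforce
    have "\<chi> (inst v a) = inv_into C g c" if "a \<in> A" for a
      using c that \<chi> inst_var_cube[OF v that] bij_betw_imp_inj_on[OF g]
      by (metis image_subset_iff inv_into_f_f)
    with v show ?thesis unfolding mono_line_def by blast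
  qed
  then show ?thesis unfolding hales_jewett_def by blast
qed

definition focused_lines :: "'a set \<Rightarrow> 'a \<Rightarrow> nat \<Rightarrow> ('a list \<Rightarrow> 'c) \<Rightarrow> nat \<Rightarrow> bool" where
  "focused_lines B z N \<chi> q \<longleftrightarrow> (\<exists>v c f. f \<in> cube (insert z B) N \<and> inj_on c {..<q} \<and>
     (\<forall>i<q. v i \<in> var_cube (insert z B) N \<and> inst (v i) z = f \<and> (\<forall>a\<in>B. \<chi> (inst (v i) a) = c i)))"

definition focusing_number :: "'a set \<Rightarrow> 'a \<Rightarrow> 'c set \<Rightarrow> nat \<Rightarrow> nat \<Rightarrow> bool" where
  "focusing_number B z C N q \<longleftrightarrow> (\<forall>\<chi>. \<chi> ` cube (insert z B) N \<subseteq> C \<longrightarrow>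
     mono_line (insert z B) N \<chi> \<or> focused_lines B z N \<chi> q)"

lemma focused_lines_extend:
  fixes \<chi> :: "'a list \<Rightarrow> 'c" and z :: 'a and B :: "'a set"
  defines "A \<equiv> insert z B"
  assumes l: "l \<in> var_cube A m" and u: "u \<in> cube A m"
    and same: "\<And>a w. a \<in> B \<Longrightarrow> w \<in> cube A n \<Longrightarrow> \<chi> (inst l a @ w) = \<chi> (u @ w)"
    and foc: "focused_lines B z n (\<lambda>w. \<chi> (u @ w)) q"
  shows "mono_line A (m + n) \<chi> \<or> focused_lines B z (m + n) \<chi> (Suc q)"
proof -
  obtain v c f where f: "f \<in> cube A n" and inj: "inj_on c {..<q}"
    and v: "\<And>i. i < q \<Longrightarrow> v i \<in> var_cube A n" and focus: "\<And>i. i < q \<Longrightarrow> inst (v i) z = f"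
    and col: "\<And>i a. i < q \<Longrightarrow> a \<in> B \<Longrightarrow> \<chi> (u @ inst (v i) a) = c i"
    using foc unfolding focused_lines_def A_def by blast
  show ?thesis
  proof (cases "\<exists>i<q. c i = \<chi> (u @ f)")
    case True
    then obtain i where i: "i < q" "c i = \<chi> (u @ f)" by blast
    have "mono_line A n (\<lambda>w. \<chi> (u @ w))"
      unfolding mono_line_def using v[OF i(1)] col[OF i(1)] focus[OF i(1)] i(2)
      by (intro bexI[of _ "v i"] exI[of _ "c i"]) (auto simp: A_def)
    then show ?thesis using mono_line_prefix[OF u] by blast
  next
    case False
    define V where "V i = (if i < q then l @ v i else l @ map Some f)" for i
    define C where "C i = (if i < q then c i else \<chi> (u @ f))" for i
    have "inj_on C {..<Suc q}"
      using inj False by (auto simp: C_def inj_on_def less_Suc_eq)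
    moreover have "V i \<in> var_cube A (m + n)" if "i < Suc q" for i
      using append_var_cube[OF l v] append_var_cube_cube[OF l f] by (auto simp: V_def)
    moreover have "inst (V i) z = inst l z @ f" if "i < Suc q" for i
      using focus by (simp add: V_def)
    moreover have "\<chi> (inst (V i) a) = C i" if "i < Suc q" "a \<in> B" for i a
    proof (cases "i < q")
      case True
      have "inst (v i) a \<in> cube A n" using inst_var_cube[OF v[OF True]] that(2) by (simp add: A_def)
      then show ?thesis using same[OF that(2)] col[OF True that(2)] True by (simp add: V_def C_def)
    next
      case False
      then show ?thesis using same[OF that(2) f] by (simp add: V_def C_def)
    qed
    moreover have "inst l z @ f \<in> cube A (m + n)"
      using append_cube[OF inst_var_cube[OF l] f] by (simp add: A_def)
    ultimately have "focused_lines B z (m + n) \<chi> (Suc q)"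
      unfolding focused_lines_def A_def by blast
    then show ?thesis ..
  qed
qed

lemma line_with_uniform_suffix_colouring:
  fixes C :: "'c set"
  assumes HJ: "\<And>r. hales_jewett B {..<r::nat}" and "B \<subseteq> A" "finite A" "finite C"
  shows "\<exists>m. \<forall>\<chi>. \<chi> ` cube A (m + n) \<subseteq> C \<longrightarrow>
    (\<exists>l\<in>var_cube B m. \<forall>a\<in>B. \<forall>b\<in>B. \<forall>w\<in>cube A n. \<chi> (inst l a @ w) = \<chi> (inst l b @ w))"
proof -
  \<comment> \<open>A word u over B is coloured by the colouring w \<mapsto> \<chi> (u @ w) it induces on the last n letters.\<close>
  define F where "F = cube A n \<rightarrow>\<^sub>E C"
  have "finite F" unfolding F_def using assms by (intro finite_PiE finite_cube) auto
  then have "hales_jewett B F" by (rule hales_jewett_finite_colours[OF HJ])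
  then obtain m where m: "\<And>\<psi>. \<psi> ` cube B m \<subseteq> F \<Longrightarrow> mono_line B m \<psi>"
    unfolding hales_jewett_def by blast
  have "\<exists>l\<in>var_cube B m. \<forall>a\<in>B. \<forall>b\<in>B. \<forall>w\<in>cube A n. \<chi> (inst l a @ w) = \<chi> (inst l b @ w)"
    if \<chi>: "\<chi> ` cube A (m + n) \<subseteq> C" for \<chi>
  proof -
    define \<psi> where "\<psi> u = restrict (\<lambda>w. \<chi> (u @ w)) (cube A n)" for u
    have "\<psi> u \<in> F" if "u \<in> cube B m" for u
    proof -
      have "u \<in> cube A m" using that cube_mono[OF \<open>B \<subseteq> A\<close>] by blast
      then have "\<chi> (u @ w) \<in> C" if "w \<in> cube A n" for w
        using \<chi> append_cube[OF _ that] by blast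
      then show ?thesis by (simp add: F_def \<psi>_def)
    qed
    then have "\<psi> ` cube B m \<subseteq> F" by blast
    then obtain l c where l: "l \<in> var_cube B m" and lc: "\<forall>a\<in>B. \<psi> (inst l a) = c"
      using m unfolding mono_line_def by blast
    have "\<chi> (inst l a @ w) = \<chi> (inst l b @ w)" if "a \<in> B" "b \<in> B" "w \<in> cube A n" for a b w
    proof -
      have "\<psi> (inst l a) w = \<psi> (inst l b) w" using lc that(1,2) by simp
      then show ?thesis using that(3) by (simp add: \<psi>_def)
    qed
    with l show ?thesis by blast
  qed
  then show ?thesis by blast
qed

lemma focusing_number_Suc:
  fixes C :: "'c set"
  assumes HJ: "\<And>r. hales_jewett B {..<r::nat}" and b0: "b0 \<in> B"
    and "finite B" "finite C" and n: "focusing_number B z C n q"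
  shows "\<exists>N. focusing_number B z C N (Suc q)"
proof -
  let ?A = "insert z B"
  obtain m where m: "\<And>\<chi>. \<chi> ` cube ?A (m + n) \<subseteq> C \<Longrightarrow>
      \<exists>l\<in>var_cube B m. \<forall>a\<in>B. \<forall>b\<in>B. \<forall>w\<in>cube ?A n. \<chi> (inst l a @ w) = \<chi> (inst l b @ w)"
    using line_with_uniform_suffix_colouring[OF HJ subset_insertI, of z C n] assms(3,4) by auto
  have "focusing_number B z C (m + n) (Suc q)"
    unfolding focusing_number_def
  proof (intro allI impI)
    fix \<chi> :: "'a list \<Rightarrow> 'c" assume \<chi>: "\<chi> ` cube ?A (m + n) \<subseteq> C"
    then obtain l where l: "l \<in> var_cube B m"
      and uniform: "\<forall>a\<in>B. \<forall>b\<in>B. \<forall>w\<in>cube ?A n. \<chi> (inst l a @ w) = \<chi> (inst l b @ w)"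
      using m by blast
    have same: "\<chi> (inst l a @ w) = \<chi> (inst l b0 @ w)" if "a \<in> B" "w \<in> cube ?A n" for a w
      using uniform that b0 by blast
    have lA: "l \<in> var_cube ?A m" using var_cube_mono[OF subset_insertI] l ..
    have u: "inst l b0 \<in> cube ?A m" using inst_var_cube[OF lA] b0 by simp
    have "(\<lambda>w. \<chi> (inst l b0 @ w)) ` cube ?A n \<subseteq> C"
      using \<chi> append_cube[OF u] by blast
    then have "mono_line ?A n (\<lambda>w. \<chi> (inst l b0 @ w))
        \<or> focused_lines B z n (\<lambda>w. \<chi> (inst l b0 @ w)) q"
      using n unfolding focusing_number_def by blast
    then show "mono_line ?A (m + n) \<chi> \<or> focused_lines B z (m + n) \<chi> (Suc q)"
      using mono_line_prefix[OF u, of n \<chi>]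
        focused_lines_extend[where \<chi>=\<chi> and z=z and B=B and l=l and u="inst l b0", OF lA u same]
      by blast
  qed
  then show ?thesis ..
qed

lemma focusing_number_exists:
  assumes "\<And>r. hales_jewett B {..<r::nat}" "b0 \<in> B" "finite B" "finite C"
  shows "\<exists>N. focusing_number B z C N q"
proof (induction q)
  case 0
  have "focused_lines B z 0 \<chi> 0" for \<chi> :: "'a list \<Rightarrow> 'c"
    unfolding focused_lines_def by (rule exI, rule exI, rule exI[of _ "[]"]) (simp add: Nil_cube)
  then have "focusing_number B z C 0 0"
    unfolding focusing_number_def by blast
  then show ?case ..
next
  case (Suc q)
  then obtain n where "focusing_number B z C n q" ..
  then show ?case by (rule focusing_number_Suc[OF assms])
qed

lemma focused_lines_card_imp_mono_line:
  assumes "finite C" and \<chi>: "\<chi> ` cube (insert z B) N \<subseteq> C" and b0: "b0 \<in> B"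
    and "focused_lines B z N \<chi> (card C)"
  shows "mono_line (insert z B) N \<chi>"
proof -
  obtain v c f where f: "f \<in> cube (insert z B) N" and inj: "inj_on c {..<card C}"
    and v: "\<And>i. i < card C \<Longrightarrow> v i \<in> var_cube (insert z B) N"
    and focus: "\<And>i. i < card C \<Longrightarrow> inst (v i) z = f"
    and col: "\<And>i a. i < card C \<Longrightarrow> a \<in> B \<Longrightarrow> \<chi> (inst (v i) a) = c i"
    using assms(4) unfolding focused_lines_def by blast
  have "c i \<in> C" if "i < card C" for i
  proof -
    have "inst (v i) b0 \<in> cube (insert z B) N" using inst_var_cube[OF v[OF that]] b0 by simp
    then show ?thesis using \<chi> col[OF that b0] by (metis image_subset_iff)
  qed
  then have "c ` {..<card C} = C"
    using card_image[OF inj] \<open>finite C\<close> by (intro card_subset_eq) auto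
  moreover have "\<chi> f \<in> C" using \<chi> f by blast
  ultimately obtain j where j: "j < card C" "c j = \<chi> f"
    by (metis imageE lessThan_iff)
  show ?thesis unfolding mono_line_def
    using v[OF j(1)] col[OF j(1)] focus[OF j(1)] j(2)
    by (intro bexI[of _ "v j"] exI[of _ "c j"]) auto
qed

theorem hales_jewett_theorem:
  assumes "finite A" "finite C"
  shows "hales_jewett A C"
proof -
  have "hales_jewett A {..<r::nat}" for r
    using \<open>finite A\<close>
  proof (induction A arbitrary: r rule: finite_induct)
    case empty
    have "mono_line {} 1 \<chi>" for \<chi> :: "'a list \<Rightarrow> nat"
      by (rule mono_line_subsingleton) simp
    then show ?case unfolding hales_jewett_def by blast
  next
    case (insert z B)
    show ?case
    proof (cases "B = {}")
      case True
      have "mono_line (insert z B) 1 \<chi>" for \<chi> :: "'a list \<Rightarrow> nat"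
        by (rule mono_line_subsingleton) (simp add: True)
      then show ?thesis unfolding hales_jewett_def by blast
    next
      case False
      then obtain b0 where b0: "b0 \<in> B" by blast
      obtain N where N: "focusing_number B z {..<r} N r"
        using focusing_number_exists[OF insert.IH b0 insert.hyps(1) finite_lessThan[of r]] by blast
      have "mono_line (insert z B) N \<chi>" if \<chi>: "\<chi> ` cube (insert z B) N \<subseteq> {..<r}" for \<chi>
      proof -
        have "mono_line (insert z B) N \<chi> \<or> focused_lines B z N \<chi> (card {..<r})"
          using N \<chi> unfolding focusing_number_def by simp
        then show ?thesis
          using focused_lines_card_imp_mono_line[OF finite_lessThan \<chi> b0] by blast
      qed
      then show ?thesis unfolding hales_jewett_def by blast
    qed
  qed
  then show ?thesis using hales_jewett_finite_colours \<open>finite C\<close> by metis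
qed

section \<open>Constant and variable spans\<close>

lemma inst_concat: "inst (concat ws) a = concat (map (\<lambda>w. inst w a) ws)"
  by (simp add: inst_def map_concat)

lemma inst_vinst: "inst (vinst w b) a = inst w (case b of None \<Rightarrow> a | Some d \<Rightarrow> d)"
  by (induct w) (auto simp: inst_def vinst_def split: option.splits)

lemma vinst_Some: "vinst w (Some a) = map Some (inst w a)"
  by (induct w) (auto simp: inst_def vinst_def split: option.splits)

lemma const_span_mono: "I \<subseteq> J \<Longrightarrow> const_span A s I \<subseteq> const_span A s J"
  unfolding const_span_def by blast

lemma var_span_mono: "I \<subseteq> J \<Longrightarrow> var_span A s I \<subseteq> var_span A s J"
  unfolding var_span_def by blast

lemma var_span_interval_less: "w \<in> var_span A s {M..<K} \<Longrightarrow> M < K"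
  unfolding var_span_def by (fastforce simp: neq_Nil_conv)

lemma inst_var_span:
  assumes "w \<in> var_span A s I" and "a \<in> A"
  shows "inst w a \<in> const_span A s I"
proof -
  obtain ps where w: "w = concat (map (\<lambda>(l, b). vinst (s l) b) ps)" and "ps \<noteq> []"
    and "sorted_wrt (<) (map fst ps)" "set (map fst ps) \<subseteq> I"
    and letters: "set (map snd ps) \<subseteq> insert None (Some ` A)"
    using assms(1) unfolding var_span_def by blast
  define qs where "qs = map (\<lambda>(l, b). (l, case b of None \<Rightarrow> a | Some d \<Rightarrow> d)) ps"
  have "map fst qs = map fst ps" "qs \<noteq> []"
    using \<open>ps \<noteq> []\<close> by (simp_all add: qs_def split_def)
  moreover have "set (map snd qs) \<subseteq> A"
    using letters \<open>a \<in> A\<close> by (auto simp: qs_def split: option.splits)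
  moreover have "inst w a = concat (map (\<lambda>(l, a). inst (s l) a) qs)"
    by (simp add: w qs_def inst_concat inst_vinst split_def comp_def)
  ultimately show ?thesis
    using \<open>sorted_wrt (<) (map fst ps)\<close> \<open>set (map fst ps) \<subseteq> I\<close>
    unfolding const_span_def by (intro CollectI exI[of _ qs]) simp
qed

lemma const_span_append:
  assumes "u \<in> const_span A s I" "v \<in> const_span A s J" and below: "\<forall>i\<in>I. \<forall>j\<in>J. i < j"
  shows "u @ v \<in> const_span A s (I \<union> J)"
proof -
  obtain ps qs where "u = concat (map (\<lambda>(l, a). inst (s l) a) ps)"
      "v = concat (map (\<lambda>(l, a). inst (s l) a) qs)" "ps \<noteq> []"
      "set (map snd ps) \<subseteq> A" "set (map snd qs) \<subseteq> A"
      and idx: "set (map fst ps) \<subseteq> I" "set (map fst qs) \<subseteq> J"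
      and sorted: "sorted_wrt (<) (map fst ps)" "sorted_wrt (<) (map fst qs)"
    using assms(1,2) unfolding const_span_def by blast
  moreover have "sorted_wrt (<) (map fst (ps @ qs))"
    using sorted idx below by (auto simp: sorted_wrt_append)
  ultimately show ?thesis
    unfolding const_span_def by (intro CollectI exI[of _ "ps @ qs"]) auto
qed

lemma const_var_span_append:
  assumes "u \<in> const_span A s I" "w \<in> var_span A s J" and below: "\<forall>i\<in>I. \<forall>j\<in>J. i < j"
  shows "map Some u @ w \<in> var_span A s (I \<union> J)"
proof -
  obtain ps qs where u: "u = concat (map (\<lambda>(l, a). inst (s l) a) ps)"
      and qs: "w = concat (map (\<lambda>(l, b). vinst (s l) b) qs)" "qs \<noteq> []"
      "set (map snd qs) \<subseteq> insert None (Some ` A)" "None \<in> set (map snd qs)"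
      and letters: "set (map snd ps) \<subseteq> A"
      and idx: "set (map fst ps) \<subseteq> I" "set (map fst qs) \<subseteq> J"
      and sorted: "sorted_wrt (<) (map fst ps)" "sorted_wrt (<) (map fst qs)"
    using assms(1,2) unfolding const_span_def var_span_def by blast
  define ps' where "ps' = map (\<lambda>(l, a). (l, Some a)) ps"
  have "map Some u = concat (map (\<lambda>(l, b). vinst (s l) b) ps')"
    by (simp add: u ps'_def vinst_Some map_concat split_def comp_def)
  moreover have "map fst ps' = map fst ps" "set (map snd ps') \<subseteq> Some ` A"
    using letters by (auto simp: ps'_def split_def)
  moreover have "sorted_wrt (<) (map fst ps @ map fst qs)"
    using sorted idx below by (auto simp: sorted_wrt_append)
  ultimately show ?thesis
    using qs idx unfolding var_span_def by (intro CollectI exI[of _ "ps' @ qs"]) auto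
qed

lemma const_span_last_block:
  assumes "e \<in> const_span A s I"
  shows "\<exists>l a u. l \<in> I \<and> a \<in> A \<and> u \<in> insert [] (const_span A s (I \<inter> {..<l}))
    \<and> e = u @ inst (s l) a"
proof -
  obtain ps where e: "e = concat (map (\<lambda>(l, a). inst (s l) a) ps)" and "ps \<noteq> []"
    and sorted: "sorted_wrt (<) (map fst ps)" and idx: "set (map fst ps) \<subseteq> I"
    and letters: "set (map snd ps) \<subseteq> A"
    using assms unfolding const_span_def by blast
  then obtain qs l a where ps: "ps = qs @ [(l, a)]"
    by (metis prod.collapse rev_exhaust)
  define u where "u = concat (map (\<lambda>(l, a). inst (s l) a) qs)"
  have "u \<in> insert [] (const_span A s (I \<inter> {..<l}))"
  proof (cases "qs = []")
    case False
    then show ?thesis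
      using sorted idx letters unfolding u_def const_span_def ps
      by (intro insertI2 CollectI exI[of _ qs]) (auto simp: sorted_wrt_append)
  qed (simp add: u_def)
  then show ?thesis
    using idx letters by (intro exI[of _ l] exI[of _ a] exI[of _ u]) (auto simp: e ps u_def)
qed

definition var_block :: "(nat \<Rightarrow> 'a option list) \<Rightarrow> nat \<Rightarrow> 'a option list \<Rightarrow> 'a option list" where
  "var_block s M v = concat (map (\<lambda>(l, b). vinst (s l) b) (zip [M..<M + length v] v))"

lemma var_block_in_var_span:
  assumes "v \<in> var_cube A N"
  shows "var_block s M v \<in> var_span A s {M..<M + N}"
proof -
  have "length v = N" "set v \<subseteq> insert None (Some ` A)" "None \<in> set v"
    using assms by (auto simp: var_cube_def is_var_word_def)
  then show ?thesis
    unfolding var_span_def var_block_def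
    by (intro CollectI exI[of _ "zip [M..<M + N] v"]) auto
qed

lemma inst_var_block: "inst (var_block s M v) a = inst (var_block s M (map Some (inst v a))) b"
  by (simp add: var_block_def inst_def[of v] inst_concat zip_map2 inst_vinst split_def comp_def
      split: option.splits)

lemma prefix_const_span:
  assumes "p \<in> insert [] (const_span A s {..<M})" "w \<in> var_span A s {M..<K}" "a \<in> A"
  shows "p @ inst w a \<in> const_span A s {..<K}"
proof -
  have w: "inst w a \<in> const_span A s {M..<K}" by (rule inst_var_span[OF assms(2,3)])
  show ?thesis
  proof (cases "p = []")
    case True
    have "{M..<K} \<subseteq> {..<K}" by (simp add: subset_iff)
    with True show ?thesis using const_span_mono w by (metis append_Nil subsetD)
  next
    case False
    then have "p @ inst w a \<in> const_span A s ({..<M} \<union> {M..<K})"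
      using assms(1) by (intro const_span_append[OF _ w]) auto
    moreover have "{..<M} \<union> {M..<K} = {..<K}"
      using var_span_interval_less[OF assms(2)] by (simp add: ivl_disj_un_one)
    ultimately show ?thesis by simp
  qed
qed

lemma prefix_var_span:
  assumes "p \<in> insert [] (const_span A s {..<M})" "w \<in> var_span A s {M..<K}"
  shows "map Some p @ w \<in> var_span A s {..<K}"
proof (cases "p = []")
  case True
  have "{M..<K} \<subseteq> {..<K}" by (simp add: subset_iff)
  with True show ?thesis using var_span_mono assms(2) by (metis append_Nil list.simps(8) subsetD)
next
  case False
  then have "map Some p @ w \<in> var_span A s ({..<M} \<union> {M..<K})"
    using assms(1) by (intro const_var_span_append[OF _ assms(2)]) auto
  moreover have "{..<M} \<union> {M..<K} = {..<K}"
    using var_span_interval_less[OF assms(2)] by (simp add: ivl_disj_un_one)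
  ultimately show ?thesis by simp
qed

section \<open>Extracted sequences whose constant span avoids E\<close>

lemma prefixes_extend:
  assumes "P \<subseteq> insert [] (const_span A s {..<M})" "w \<in> var_span A s {M..<K}"
  shows "P \<union> (\<lambda>(p, a). p @ inst w a) ` (P \<times> A) \<subseteq> insert [] (const_span A s {..<K})"
proof -
  have "const_span A s {..<M} \<subseteq> const_span A s {..<K}"
    using var_span_interval_less[OF assms(2)] by (intro const_span_mono) simp
  moreover have "p @ inst w a \<in> const_span A s {..<K}" if "p \<in> P" "a \<in> A" for p a
    using prefix_const_span[OF _ assms(2) that(2)] that(1) assms(1) by blast
  ultimately have "P \<subseteq> insert [] (const_span A s {..<K})"
    and "(\<lambda>(p, a). p @ inst w a) ` (P \<times> A) \<subseteq> const_span A s {..<K}"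
    using assms(1) by auto
  then show ?thesis by blast
qed

lemma avoiding_block:
  assumes "finite A"
    and no_line: "\<And>K w. w \<in> var_span A s {..<K} \<Longrightarrow> \<exists>a\<in>A. inst w a \<notin> E"
    and "finite P" and P: "P \<subseteq> insert [] (const_span A s {..<M})"
  shows "\<exists>K. \<exists>w\<in>var_span A s {M..<K}. \<forall>p\<in>P. \<forall>a\<in>A. p @ inst w a \<notin> E"
proof -
  \<comment> \<open>The block var_block s M (map Some c) contains no variable, so the letter substituted
    for it is immaterial.\<close>
  define \<chi> where "\<chi> c = {p \<in> P. p @ inst (var_block s M (map Some c)) undefined \<in> E}" for c
  have "hales_jewett A (Pow P)" using assms(1,3) by (simp add: hales_jewett_theorem)
  moreover have "\<chi> ` cube A N \<subseteq> Pow P" for N by (auto simp: \<chi>_def)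
  ultimately obtain N where "mono_line A N \<chi>" unfolding hales_jewett_def by blast
  then obtain v c where v: "v \<in> var_cube A N" and c: "\<forall>a\<in>A. \<chi> (inst v a) = c"
    unfolding mono_line_def by blast
  define w where "w = var_block s M v"
  have w: "w \<in> var_span A s {M..<M + N}"
    unfolding w_def by (rule var_block_in_var_span[OF v])
  have hit: "p @ inst w a \<in> E \<longleftrightarrow> p \<in> c" if "p \<in> P" "a \<in> A" for p a
  proof -
    have "p @ inst w a \<in> E \<longleftrightarrow> p \<in> \<chi> (inst v a)"
      using that by (simp add: \<chi>_def w_def inst_var_block[of s M v a undefined])
    then show ?thesis using c that by simp
  qed
  have "\<forall>p\<in>P. \<forall>a\<in>A. p @ inst w a \<notin> E"
  proof (intro ballI notI)
    fix p a assume "p \<in> P" "a \<in> A" "p @ inst w a \<in> E"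
    then have "\<forall>b\<in>A. inst (map Some p @ w) b \<in> E" using hit by simp
    moreover have "map Some p @ w \<in> var_span A s {..<M + N}"
      using prefix_var_span[OF _ w] P \<open>p \<in> P\<close> by (simp add: subset_iff)
    ultimately show False using no_line by blast
  qed
  with w show ?thesis by blast
qed

lemma const_span_subset_prefix_sets:
  assumes "[] \<in> P 0" and P_Suc: "\<And>n. P (Suc n) = P n \<union> (\<lambda>(p, a). p @ inst (t n) a) ` (P n \<times> A)"
  shows "insert [] (const_span A t {..<n}) \<subseteq> P n"
proof (induction n rule: less_induct)
  case (less n)
  have P_mono: "P l \<subseteq> P n" if "l \<le> n" for l n
    using lift_Suc_mono_le[of P, OF _ that] P_Suc by blast
  have "e \<in> P n" if e_span: "e \<in> const_span A t {..<n}" for e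
  proof -
    obtain l a u where "l < n" "a \<in> A" and u: "u \<in> insert [] (const_span A t ({..<n} \<inter> {..<l}))"
      and e: "e = u @ inst (t l) a"
      using const_span_last_block[OF e_span] by blast
    moreover have "{..<n} \<inter> {..<l} = {..<l}" using \<open>l < n\<close> by auto
    ultimately have "u \<in> P l" using less.IH[OF \<open>l < n\<close>] by auto
    then have "e \<in> P (Suc l)" using \<open>a \<in> A\<close> by (auto simp: P_Suc e)
    then show ?thesis using P_mono \<open>l < n\<close> by (meson Suc_leI subsetD)
  qed
  moreover have "[] \<in> P n" using P_mono \<open>[] \<in> P 0\<close> by blast
  ultimately show ?case by blast
qed

lemma avoiding_block_sequence:
  assumes "finite A"
    and no_line: "\<And>K w. w \<in> var_span A s {..<K} \<Longrightarrow> \<exists>a\<in>A. inst w a \<notin> E"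
  shows "\<exists>t M P. M 0 = 0 \<and> P 0 = {[]} \<and> (\<forall>n. t n \<in> var_span A s {M n..<M (Suc n)}
    \<and> (\<forall>p\<in>P n. \<forall>a\<in>A. p @ inst (t n) a \<notin> E)
    \<and> P (Suc n) = P n \<union> (\<lambda>(p, a). p @ inst (t n) a) ` (P n \<times> A))"
proof -
  \<comment> \<open>States (M, P): the blocks chosen so far end before M, and P collects their constant combinations.\<close>
  define admissible where "admissible (n::nat) = (\<lambda>(M, P). finite P
      \<and> P \<subseteq> insert [] (const_span A s {..<M}) \<and> (n = 0 \<longrightarrow> (M, P) = (0, {[]})))" for n
  define step where "step x y = (\<exists>w\<in>var_span A s {fst x..<fst y}.
      (\<forall>p\<in>snd x. \<forall>a\<in>A. p @ inst w a \<notin> E)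
      \<and> snd y = snd x \<union> (\<lambda>(p, a). p @ inst w a) ` (snd x \<times> A))" for x y
  have "\<exists>y. admissible (Suc n) y \<and> step x y" if "admissible n x" for n x
  proof -
    obtain M P where x: "x = (M, P)" by fastforce
    with that have P: "finite P" "P \<subseteq> insert [] (const_span A s {..<M})"
      by (auto simp: admissible_def)
    have "\<exists>K. \<exists>w\<in>var_span A s {M..<K}. \<forall>p\<in>P. \<forall>a\<in>A. p @ inst w a \<notin> E"
      by (rule avoiding_block[OF assms(1) _ P]) (rule no_line)
    then obtain K w where w: "w \<in> var_span A s {M..<K}" and "\<forall>p\<in>P. \<forall>a\<in>A. p @ inst w a \<notin> E"
      by blast
    then have "step x (K, P \<union> (\<lambda>(p, a). p @ inst w a) ` (P \<times> A))"
      by (auto simp: step_def x)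
    moreover have "admissible (Suc n) (K, P \<union> (\<lambda>(p, a). p @ inst w a) ` (P \<times> A))"
      using P prefixes_extend[OF P(2) w] \<open>finite A\<close> by (simp add: admissible_def)
    ultimately show ?thesis by blast
  qed
  moreover have "admissible 0 (0, {[]})" by (simp add: admissible_def)
  ultimately obtain f where f: "\<And>n. admissible n (f n)" "\<And>n. step (f n) (f (Suc n))"
    using dependent_nat_choice[of admissible "\<lambda>_. step"] by blast
  define M where "M n = fst (f n)" for n
  define P where "P n = snd (f n)" for n
  have "\<forall>n. \<exists>w. w \<in> var_span A s {M n..<M (Suc n)} \<and> (\<forall>p\<in>P n. \<forall>a\<in>A. p @ inst w a \<notin> E)
      \<and> P (Suc n) = P n \<union> (\<lambda>(p, a). p @ inst w a) ` (P n \<times> A)"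
  proof
    fix n
    show "\<exists>w. w \<in> var_span A s {M n..<M (Suc n)} \<and> (\<forall>p\<in>P n. \<forall>a\<in>A. p @ inst w a \<notin> E)
        \<and> P (Suc n) = P n \<union> (\<lambda>(p, a). p @ inst w a) ` (P n \<times> A)"
      using f(2)[of n] unfolding step_def M_def P_def by blast
  qed
  then obtain t where "\<forall>n. t n \<in> var_span A s {M n..<M (Suc n)}
      \<and> (\<forall>p\<in>P n. \<forall>a\<in>A. p @ inst (t n) a \<notin> E)
      \<and> P (Suc n) = P n \<union> (\<lambda>(p, a). p @ inst (t n) a) ` (P n \<times> A)"
    by metis
  moreover have "M 0 = 0" "P 0 = {[]}"
    using f(1)[of 0] by (auto simp: admissible_def M_def P_def split: prod.splits)
  ultimately show ?thesis by (intro exI[of _ t] exI[of _ M] exI[of _ P] conjI)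
qed

lemma avoiding_extracted_sequence:
  assumes "finite A"
    and no_line: "\<And>K w. w \<in> var_span A s {..<K} \<Longrightarrow> \<exists>a\<in>A. inst w a \<notin> E"
  shows "\<exists>t. extracted A t s \<and> E \<inter> const_span A t UNIV = {}"
proof -
  have "\<exists>t M P. M 0 = 0 \<and> P 0 = {[]} \<and> (\<forall>n. t n \<in> var_span A s {M n..<M (Suc n)}
    \<and> (\<forall>p\<in>P n. \<forall>a\<in>A. p @ inst (t n) a \<notin> E)
    \<and> P (Suc n) = P n \<union> (\<lambda>(p, a). p @ inst (t n) a) ` (P n \<times> A))"
    by (rule avoiding_block_sequence[OF assms(1)]) (rule no_line)
  then obtain t M P where "M 0 = 0" "P 0 = {[]}" and blocks: "\<forall>n. t n \<in> var_span A s {M n..<M (Suc n)}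
    \<and> (\<forall>p\<in>P n. \<forall>a\<in>A. p @ inst (t n) a \<notin> E)
    \<and> P (Suc n) = P n \<union> (\<lambda>(p, a). p @ inst (t n) a) ` (P n \<times> A)"
    by (elim exE conjE) (rule that)
  have t: "t n \<in> var_span A s {M n..<M (Suc n)}"
    and avoid: "\<forall>p\<in>P n. \<forall>a\<in>A. p @ inst (t n) a \<notin> E"
    and P_Suc: "P (Suc n) = P n \<union> (\<lambda>(p, a). p @ inst (t n) a) ` (P n \<times> A)" for n
    using blocks by simp_all
  have "extracted A t s"
    unfolding extracted_def using \<open>M 0 = 0\<close> t var_span_interval_less[OF t] by blast
  moreover have "e \<notin> E" if e_span: "e \<in> const_span A t UNIV" for e
  proof -
    obtain l a u where "a \<in> A" and "u \<in> insert [] (const_span A t (UNIV \<inter> {..<l}))"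
      and "e = u @ inst (t l) a"
      using const_span_last_block[OF e_span] by blast
    moreover have "insert [] (const_span A t {..<l}) \<subseteq> P l"
      using \<open>P 0 = {[]}\<close> by (intro const_span_subset_prefix_sets P_Suc) simp
    ultimately have "u \<in> P l" by auto
    then show ?thesis using avoid \<open>a \<in> A\<close> \<open>e = u @ inst (t l) a\<close> by blast
  qed
  ultimately show ?thesis by blast
qed

theorem fact2p7:
  fixes A :: "'a set" and E :: "'a list set" and s :: "nat \<Rightarrow> 'a option list"
  assumes "finite A" and "A \<noteq> {}"
    and "E \<subseteq> words A"
    and "s \<in> var_seqs A"
    and "large A E s"
  shows "\<exists>m w. w \<in> var_span A s {0..m} \<and> (\<forall>a\<in>A. inst w a \<in> E)"
proof (rule ccontr)
  assume no_line: "\<not> ?thesis"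
  have "\<exists>a\<in>A. inst w a \<notin> E" if "w \<in> var_span A s {..<K}" for K w
  proof -
    have "var_span A s {..<K} \<subseteq> var_span A s {0..K}"
      by (rule var_span_mono) (simp add: subset_iff)
    with that have "w \<in> var_span A s {0..K}" ..
    with no_line show ?thesis by blast
  qed
  then have "\<exists>t. extracted A t s \<and> E \<inter> const_span A t UNIV = {}"
    by (rule avoiding_extracted_sequence[OF assms(1)])
  then obtain t where "extracted A t s" "E \<inter> const_span A t UNIV = {}" by blast
  with \<open>large A E s\<close> show False unfolding large_def by blast
qed

end
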